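(* Let $n\ge 5$. Then the strong metric dimension of $L(n)$ is $n(n-2)$.
   Context: For $n\ge 5$, $H(n)$ is the graph with vertex set $V_1\cup V_2$, where $V_1=\{v_1,\dots,v_n\}$ and $V_2=\{v_iv_j: 1\le i<j\le n\}$, and $v_r$ is adjacent to $v_iv_j$ iff $r\in\{i,j\}$ (no other edges). $L(n)$ is the line graph of $H(n)$: its vertices are the edges of $H(n)$, two being adjacent iff they share an endpoint. A set $Q\subseteq V(G)$ is a strong resolving set of $G$ if for any two distinct vertices $p,q$ there is $s\in Q$ such that $p$ lies on some shortest $q$–$s$ path or $q$ lies on some shortest $p$–$s$ path; the strong metric dimension is the minimum size of a strong resolving set. *)

theory Defs
  imports Main
begin

text \<open>Simple graphs given by a vertex set V and a symmetric adjacency relation E.\<close>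

definition walk :: "'a set \<Rightarrow> ('a \<Rightarrow> 'a \<Rightarrow> bool) \<Rightarrow> 'a list \<Rightarrow> bool" where
  "walk V E xs \<longleftrightarrow> xs \<noteq> [] \<and> set xs \<subseteq> V \<and> (\<forall>i. Suc i < length xs \<longrightarrow> E (xs ! i) (xs ! Suc i))"

text \<open>Distance = least number of edges of a walk from u to v (graphs considered are connected).\<close>
definition gdist :: "'a set \<Rightarrow> ('a \<Rightarrow> 'a \<Rightarrow> bool) \<Rightarrow> 'a \<Rightarrow> 'a \<Rightarrow> nat" where
  "gdist V E u v = (LEAST k. \<exists>xs. walk V E xs \<and> hd xs = u \<and> last xs = v \<and> length xs = Suc k)"

definition shortest_path :: "'a set \<Rightarrow> ('a \<Rightarrow> 'a \<Rightarrow> bool) \<Rightarrow> 'a \<Rightarrow> 'a \<Rightarrow> 'a list \<Rightarrow> bool" where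
  "shortest_path V E u v xs \<longleftrightarrow> walk V E xs \<and> hd xs = u \<and> last xs = v \<and> length xs = Suc (gdist V E u v)"

definition on_shortest_path :: "'a set \<Rightarrow> ('a \<Rightarrow> 'a \<Rightarrow> bool) \<Rightarrow> 'a \<Rightarrow> 'a \<Rightarrow> 'a \<Rightarrow> bool" where
  "on_shortest_path V E p q s \<longleftrightarrow> (\<exists>xs. shortest_path V E q s xs \<and> p \<in> set xs)"

definition strong_resolving_set :: "'a set \<Rightarrow> ('a \<Rightarrow> 'a \<Rightarrow> bool) \<Rightarrow> 'a set \<Rightarrow> bool" where
  "strong_resolving_set V E Q \<longleftrightarrow> Q \<subseteq> V \<and>
     (\<forall>p\<in>V. \<forall>q\<in>V. p \<noteq> q \<longrightarrow>
        (\<exists>s\<in>Q. on_shortest_path V E p q s \<or> on_shortest_path V E q p s))"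

definition strong_metric_dim :: "'a set \<Rightarrow> ('a \<Rightarrow> 'a \<Rightarrow> bool) \<Rightarrow> nat" where
  "strong_metric_dim V E = (LEAST k. \<exists>Q. strong_resolving_set V E Q \<and> card Q = k)"

definition line_V :: "'a set \<Rightarrow> ('a \<Rightarrow> 'a \<Rightarrow> bool) \<Rightarrow> 'a set set" where
  "line_V V E = {e. \<exists>u\<in>V. \<exists>v\<in>V. E u v \<and> e = {u, v}}"

definition line_E :: "'a set \<Rightarrow> 'a set \<Rightarrow> bool" where
  "line_E e f \<longleftrightarrow> e \<noteq> f \<and> e \<inter> f \<noteq> {}"

text \<open>H(n): vertices v_i = Inl i (1 \<le> i \<le> n) and v_iv_j = Inr {i,j}; v_r ~ v_iv_j iff r \<in> {i,j}.\<close>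
definition H_V :: "nat \<Rightarrow> (nat + nat set) set" where
  "H_V n = Inl ` {1..n} \<union> Inr ` {S. \<exists>i j. 1 \<le> i \<and> i < j \<and> j \<le> n \<and> S = {i, j}}"

definition H_E :: "nat \<Rightarrow> (nat + nat set) \<Rightarrow> (nat + nat set) \<Rightarrow> bool" where
  "H_E n x y \<longleftrightarrow> x \<in> H_V n \<and> y \<in> H_V n \<and>
     (\<exists>r S. r \<in> S \<and> ((x = Inl r \<and> y = Inr S) \<or> (x = Inr S \<and> y = Inl r)))"

definition L_V :: "nat \<Rightarrow> (nat + nat set) set set" where
  "L_V n = line_V (H_V n) (H_E n)"

abbreviation L_E :: "(nat + nat set) set \<Rightarrow> (nat + nat set) set \<Rightarrow> bool" where
  "L_E \<equiv> line_E"

end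

theory Submission
  imports Defs
begin

(* A vertex of L(n) is an edge v_r -- v_rv_s of H(n), i.e. an ordered pair (r, s) with r \<noteq> s, and
   (r, s) ~ (t, u) iff r = t or (t, u) = (s, r): n cliques joined by the matching (r, s) -- (s, r).
   Distances are at most 3, and (r, s), (t, s) with r \<noteq> t are at distance 3.  Such a diametral
   pair cannot be resolved by a third vertex, so every strong resolving set contains one of the
   two; its complement thus has at most one vertex with each second coordinate, at most n in all.
   Conversely, the n vertices (2, 1), (1, 2), ..., (1, n) can all be left out: any two of them lie
   on a shortest path of the form (r, s), (r, t), (t, r), (t, u) ending outside this set. *)

lemma walk_singleton [simp]: "walk V E [x] \<longleftrightarrow> x \<in> V"
  unfolding walk_def by simp

lemma walk_Cons_Cons [simp]: "walk V E (x # y # xs) \<longleftrightarrow> x \<in> V \<and> E x y \<and> walk V E (y # xs)"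
  unfolding walk_def by (auto simp: nth_Cons less_Suc_eq_0_disj split: nat.splits)

lemma walk_take: "walk V E xs \<Longrightarrow> 0 < k \<Longrightarrow> walk V E (take k xs)"
  unfolding walk_def using set_take_subset[of k xs] by auto

lemma gdist_less_length_walk:
  assumes "walk V E xs"
  shows "gdist V E (hd xs) (last xs) < length xs"
proof -
  have len: "length xs = Suc (length xs - 1)" using assms by (simp add: walk_def)
  then have "gdist V E (hd xs) (last xs) \<le> length xs - 1"
    unfolding gdist_def using assms by (intro Least_le) blast
  then show ?thesis using len by linarith
qed

lemma shortest_path_exists:
  assumes "walk V E xs"
  shows "\<exists>ys. shortest_path V E (hd xs) (last xs) ys"
proof -
  have "\<exists>k ys. walk V E ys \<and> hd ys = hd xs \<and> last ys = last xs \<and> length ys = Suc k"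
    using assms by (metis Suc_pred length_greater_0_conv walk_def)
  from LeastI_ex[OF this] show ?thesis
    unfolding shortest_path_def gdist_def by blast
qed

lemma gdist_less_on_shortest_path:
  assumes sp: "shortest_path V E u v xs" and "p \<in> set xs" and "p \<noteq> v"
  shows "gdist V E u p < gdist V E u v"
proof -
  obtain i where i: "i < length xs" "xs ! i = p" using \<open>p \<in> set xs\<close> by (auto simp: in_set_conv_nth)
  have xs: "walk V E xs" "hd xs = u" "last xs = v" "length xs = Suc (gdist V E u v)"
    using sp unfolding shortest_path_def by auto
  have "last xs = xs ! gdist V E u v"
    using xs by (simp add: last_conv_nth walk_def)
  then have "i \<noteq> gdist V E u v" using i xs(3) \<open>p \<noteq> v\<close> by auto
  moreover have "gdist V E u p < Suc i"
  proof -
    have "hd (take (Suc i) xs) = u" using xs(2) by (cases xs) auto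
    moreover have "last (take (Suc i) xs) = p" "length (take (Suc i) xs) = Suc i"
      using i by (simp_all add: take_Suc_conv_app_nth)
    ultimately show ?thesis using gdist_less_length_walk[OF walk_take[OF xs(1), of "Suc i"]] by simp
  qed
  ultimately show ?thesis using i xs by linarith
qed

lemma lipschitz_less_length_walk:
  assumes lipschitz: "\<And>x y w. x \<in> V \<Longrightarrow> y \<in> V \<Longrightarrow> w \<in> V \<Longrightarrow> E x y \<Longrightarrow> f x w \<le> Suc (f y w)"
    and diag: "\<And>w. w \<in> V \<Longrightarrow> f w w = 0"
    and "walk V E xs"
  shows "f (hd xs) (last xs) < length xs"
  using \<open>walk V E xs\<close>
proof (induction xs rule: induct_list012)
  case (3 x y xs)
  have "f x (last (y # xs)) \<le> Suc (f y (last (y # xs)))"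
    using 3(3) by (intro lipschitz) (auto simp: walk_def)
  then show ?case using 3 by simp
qed (auto simp: walk_def diag)

lemma gdist_eqI:
  assumes lipschitz: "\<And>x y w. x \<in> V \<Longrightarrow> y \<in> V \<Longrightarrow> w \<in> V \<Longrightarrow> E x y \<Longrightarrow> f x w \<le> Suc (f y w)"
    and diag: "\<And>w. w \<in> V \<Longrightarrow> f w w = 0"
    and xs: "walk V E xs" "hd xs = u" "last xs = v" "length xs = Suc (f u v)"
  shows "gdist V E u v = f u v"
  unfolding gdist_def
proof (rule Least_equality)
  fix k assume "\<exists>ys. walk V E ys \<and> hd ys = u \<and> last ys = v \<and> length ys = Suc k"
  then obtain ys where "walk V E ys" "hd ys = u" "last ys = v" "length ys = Suc k" by blast
  then show "f u v \<le> k"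
    using lipschitz_less_length_walk[where f = f, OF lipschitz diag \<open>walk V E ys\<close>] by simp
qed (use xs in blast)

lemma strong_resolving_set_diametral_pair:
  assumes Q: "strong_resolving_set V E Q" and pq: "p \<in> V" "q \<in> V" "p \<noteq> q"
    and diam: "\<And>x y. x \<in> V \<Longrightarrow> y \<in> V \<Longrightarrow> gdist V E x y \<le> d"
    and "gdist V E p q = d" "gdist V E q p = d"
  shows "p \<in> Q \<or> q \<in> Q"
proof (rule ccontr)
  assume "\<not> (p \<in> Q \<or> q \<in> Q)"
  have beyond: False if hyp: "on_shortest_path V E x y s" "x \<notin> Q" "s \<in> Q" "y \<in> V"
    "gdist V E y x = d" for x y s
  proof -
    obtain xs where "shortest_path V E y s xs" "x \<in> set xs"
      using hyp(1) unfolding on_shortest_path_def by blast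
    moreover have "x \<noteq> s" using hyp(2,3) by blast
    ultimately have "gdist V E y x < gdist V E y s" by (rule gdist_less_on_shortest_path)
    moreover have "s \<in> V" using Q hyp(3) unfolding strong_resolving_set_def by blast
    ultimately show False using diam[OF hyp(4)] hyp(5) by (metis leD)
  qed
  obtain s where "s \<in> Q" "on_shortest_path V E p q s \<or> on_shortest_path V E q p s"
    using Q pq unfolding strong_resolving_set_def by blast
  then show False using beyond \<open>\<not> (p \<in> Q \<or> q \<in> Q)\<close> pq assms(6,7) by blast
qed

lemma strong_resolving_set_Diff:
  assumes "S \<subseteq> V"
    and connected: "\<And>u v. u \<in> V \<Longrightarrow> v \<in> V \<Longrightarrow> \<exists>xs. walk V E xs \<and> hd xs = u \<and> last xs = v"
    and resolved: "\<And>p q. p \<in> S \<Longrightarrow> q \<in> S \<Longrightarrow> p \<noteq> q \<Longrightarrow>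
      \<exists>w\<in>V - S. on_shortest_path V E p q w \<or> on_shortest_path V E q p w"
  shows "strong_resolving_set V E (V - S)"
  unfolding strong_resolving_set_def
proof (intro conjI ballI impI)
  have self: "on_shortest_path V E p q p" if pq: "p \<in> V" "q \<in> V" for p q
  proof -
    obtain xs where "shortest_path V E q p xs"
      using connected[OF pq(2,1)] shortest_path_exists by blast
    then show ?thesis unfolding on_shortest_path_def shortest_path_def walk_def by auto
  qed
  fix p q assume "p \<in> V" "q \<in> V" "p \<noteq> q"
  show "\<exists>s\<in>V - S. on_shortest_path V E p q s \<or> on_shortest_path V E q p s"
  proof (cases "p \<in> S \<and> q \<in> S")
    case True
    then show ?thesis using resolved \<open>p \<noteq> q\<close> by blast
  next
    case False
    then have "p \<in> V - S \<or> q \<in> V - S" using \<open>p \<in> V\<close> \<open>q \<in> V\<close> by blast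
    then show ?thesis using self \<open>p \<in> V\<close> \<open>q \<in> V\<close> by blast
  qed
qed simp

definition arc :: "nat \<times> nat \<Rightarrow> (nat + nat set) set" where
  "arc p = {Inl (fst p), Inr {fst p, snd p}}"

definition arcs :: "nat \<Rightarrow> (nat \<times> nat) set" where
  "arcs n = {(r, s). r \<in> {1..n} \<and> s \<in> {1..n} \<and> r \<noteq> s}"

lemma mem_arcs_iff [simp]: "(r, s) \<in> arcs n \<longleftrightarrow> r \<in> {1..n} \<and> s \<in> {1..n} \<and> r \<noteq> s"
  by (simp add: arcs_def)

lemma inj_arc: "inj arc"
  by (rule injI) (auto simp: arc_def doubleton_eq_iff prod_eq_iff)

lemma arc_eq_iff [simp]: "arc p = arc q \<longleftrightarrow> p = q"
  using inj_arc by (auto dest: injD)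

lemma Inr_in_H_V_iff: "Inr S \<in> H_V n \<longleftrightarrow> (\<exists>r s. (r, s) \<in> arcs n \<and> S = {r, s})"
proof
  assume "Inr S \<in> H_V n"
  then obtain i j where "1 \<le> i" "i < j" "j \<le> n" "S = {i, j}" unfolding H_V_def by auto
  then show "\<exists>r s. (r, s) \<in> arcs n \<and> S = {r, s}" by (intro exI[of _ i] exI[of _ j]) auto
next
  assume "\<exists>r s. (r, s) \<in> arcs n \<and> S = {r, s}"
  then obtain r s where rs: "(r, s) \<in> arcs n" "S = {r, s}" by blast
  have "\<exists>i j. 1 \<le> i \<and> i < j \<and> j \<le> n \<and> S = {i, j}"
  proof (cases "r < s")
    case True
    then show ?thesis using rs by (intro exI[of _ r] exI[of _ s]) auto
  next
    case False
    moreover have "S = {s, r}" using rs(2) by blast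
    ultimately show ?thesis using rs(1) by (intro exI[of _ s] exI[of _ r]) simp
  qed
  then show "Inr S \<in> H_V n" unfolding H_V_def by (intro UnI2 imageI CollectI)
qed

lemma L_V_eq: "L_V n = arc ` arcs n"
proof (intro set_eqI iffI)
  fix e assume "e \<in> L_V n"
  then obtain x y where "x \<in> H_V n" "y \<in> H_V n" "H_E n x y" "e = {x, y}"
    unfolding L_V_def line_V_def by blast
  then obtain r S where "r \<in> S" "Inr S \<in> H_V n" and e: "e = {Inl r, Inr S}"
    unfolding H_E_def by (auto simp: insert_commute)
  then obtain a b where ab: "(a, b) \<in> arcs n" "S = {a, b}" and "r = a \<or> r = b"
    unfolding Inr_in_H_V_iff by blast
  moreover have "{a, b} = {b, a}" by blast
  ultimately have "e = arc (a, b) \<or> e = arc (b, a)" unfolding e arc_def by auto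
  moreover have "(b, a) \<in> arcs n" using ab(1) by simp
  ultimately show "e \<in> arc ` arcs n" using ab(1) by blast
next
  fix e assume "e \<in> arc ` arcs n"
  then obtain r s where rs: "(r, s) \<in> arcs n" and e: "e = {Inl r, Inr {r, s}}"
    unfolding arc_def by auto
  have "Inl r \<in> H_V n" using rs by (simp add: H_V_def)
  moreover have "Inr {r, s} \<in> H_V n" using rs unfolding Inr_in_H_V_iff by blast
  moreover have "H_E n (Inl r) (Inr {r, s})" using calculation unfolding H_E_def by blast
  ultimately show "e \<in> L_V n" unfolding L_V_def line_V_def e by blast
qed

lemma line_E_arc_iff:
  "line_E (arc (r, s)) (arc (t, u)) \<longleftrightarrow> (r, s) \<noteq> (t, u) \<and> (r = t \<or> (t, u) = (s, r))"
  unfolding line_E_def arc_def by (auto simp: doubleton_eq_iff)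

lemma arc_in_L_V_iff [simp]: "arc p \<in> L_V n \<longleftrightarrow> p \<in> arcs n"
  by (simp add: L_V_eq inj_image_mem_iff[OF inj_arc])

lemma finite_arcs: "finite (arcs n)"
  by (rule finite_subset[of _ "{1..n} \<times> {1..n}"]) (auto simp: arcs_def)

lemma card_arcs: "card (arcs n) = n * (n - 1)"
proof -
  let ?diag = "(\<lambda>r. (r, r)) ` {1..n}"
  have "arcs n = {1..n} \<times> {1..n} - ?diag" "?diag \<subseteq> {1..n} \<times> {1..n}" by (auto simp: arcs_def)
  moreover have "card ?diag = n" by (simp add: card_image inj_on_def)
  ultimately show ?thesis by (simp add: card_Diff_subset card_cartesian_product diff_mult_distrib2)
qed

lemma finite_L_V: "finite (L_V n)"
  by (simp add: L_V_eq finite_arcs)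

lemma card_L_V: "card (L_V n) = n * (n - 1)"
  by (simp add: L_V_eq card_image[OF inj_on_subset[OF inj_arc]] card_arcs)

(* Distance 2 is realised through (s, r) when t = s and through (r, t) when u = r; in general
   (r, s), (r, t), (t, r), (t, u) is a route of length 3. *)
fun arc_dist :: "nat \<times> nat \<Rightarrow> nat \<times> nat \<Rightarrow> nat" where
  "arc_dist (r, s) (t, u) =
    (if (r, s) = (t, u) then 0 else if r = t \<or> (t, u) = (s, r) then 1
     else if t = s \<or> u = r then 2 else 3)"

lemma arc_dist_le_3: "arc_dist p q \<le> 3"
  by (cases p; cases q) simp

lemma arc_dist_eq_0_iff: "arc_dist p q = 0 \<longleftrightarrow> p = q"
  by (cases p; cases q) simp

lemma arc_dist_eq_1_iff: "arc_dist (r, s) (t, u) = 1 \<longleftrightarrow> line_E (arc (r, s)) (arc (t, u))"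
  by (auto simp: line_E_arc_iff)

lemma arc_dist_le_2_iff: "arc_dist (r, s) (t, u) \<le> 2 \<longleftrightarrow> (r, s) = (t, u) \<or> r = t \<or> t = s \<or> u = r"
  by auto

lemma arc_dist_lipschitz:
  assumes adj: "line_E (arc (a, b)) (arc (c, d))"
  shows "arc_dist (a, b) w \<le> Suc (arc_dist (c, d) w)"
proof -
  obtain e f where w: "w = (e, f)" by (cases w)
  consider "arc_dist (c, d) w = 0" | "arc_dist (c, d) w = 1" | "2 \<le> arc_dist (c, d) w"
    by linarith
  then show ?thesis
  proof cases
    case 1
    then have "w = (c, d)" by (simp add: arc_dist_eq_0_iff)
    moreover have "arc_dist (a, b) (c, d) = 1" using adj arc_dist_eq_1_iff by blast
    ultimately show ?thesis by simp
  next
    case 2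
    then have "arc_dist (a, b) w \<le> 2"
      using adj unfolding w arc_dist_eq_1_iff arc_dist_le_2_iff line_E_arc_iff by auto
    then show ?thesis using 2 by linarith
  next
    case 3
    then show ?thesis using arc_dist_le_3[of "(a, b)" w] by linarith
  qed
qed

lemma arc_walk_exists:
  assumes "p \<in> arcs n" "q \<in> arcs n"
  shows "\<exists>xs. walk (L_V n) line_E xs \<and> hd xs = arc p \<and> last xs = arc q \<and> length xs = Suc (arc_dist p q)"
proof -
  obtain r s t u where p: "p = (r, s)" and q: "q = (t, u)" by (cases p, cases q)
  consider "arc_dist p q = 0" | "arc_dist p q = 1" | "arc_dist p q = 2" "t = s"
    | "arc_dist p q = 2" "t \<noteq> s" "u = r" | "arc_dist p q = 3"
    using arc_dist_le_3[of p q] unfolding p q by (auto split: if_splits)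
  then show ?thesis
  proof cases
    case 1
    then show ?thesis using assms by (intro exI[of _ "[arc p]"]) (simp add: arc_dist_eq_0_iff)
  next
    case 2
    then have "line_E (arc p) (arc q)" unfolding p q by (simp only: arc_dist_eq_1_iff)
    then show ?thesis using 2 assms by (intro exI[of _ "[arc p, arc q]"]) simp
  next
    case 3
    then show ?thesis using assms unfolding p q
      by (intro exI[of _ "[arc (r, s), arc (s, r), arc (s, u)]"]) (auto simp: line_E_arc_iff)
  next
    case 4
    then show ?thesis using assms unfolding p q
      by (intro exI[of _ "[arc (r, s), arc (r, t), arc (t, r)]"]) (auto simp: line_E_arc_iff)
  next
    case 5
    then show ?thesis using assms unfolding p q
      by (intro exI[of _ "[arc (r, s), arc (r, t), arc (t, r), arc (t, u)]"])
        (auto simp: line_E_arc_iff split: if_splits)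
  qed
qed

lemma gdist_L_V_arc:
  assumes "p \<in> arcs n" "q \<in> arcs n"
  shows "gdist (L_V n) line_E (arc p) (arc q) = arc_dist p q"
proof -
  let ?f = "\<lambda>x y. arc_dist (inv arc x) (inv arc y)"
  have "gdist (L_V n) line_E (arc p) (arc q) = ?f (arc p) (arc q)"
  proof (rule exE[OF arc_walk_exists[OF assms]], rule gdist_eqI)
    fix x y w assume "x \<in> L_V n" "y \<in> L_V n" "w \<in> L_V n" "line_E x y"
    then show "?f x w \<le> Suc (?f y w)"
      using arc_dist_lipschitz by (auto simp: L_V_eq inv_f_f[OF inj_arc])
  qed (auto simp: L_V_eq inv_f_f[OF inj_arc] arc_dist_eq_0_iff)
  then show ?thesis by (simp add: inv_f_f[OF inj_arc])
qed

lemma on_shortest_path_arc_walk: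
  assumes "p \<in> arcs n" "q \<in> arcs n" "walk (L_V n) line_E xs" "hd xs = arc p" "last xs = arc q"
    "length xs = Suc (arc_dist p q)" "x \<in> set xs"
  shows "on_shortest_path (L_V n) line_E x (arc p) (arc q)"
  using assms gdist_L_V_arc[of p n q] unfolding on_shortest_path_def shortest_path_def by auto

lemma on_shortest_path_via_pair_vertex:
  assumes rs: "(r, s) \<in> arcs n" and tu: "(t, u) \<in> arcs n" and "r \<noteq> t" "u \<noteq> r"
  shows "on_shortest_path (L_V n) line_E (arc (r, t)) (arc (r, s)) (arc (t, u))"
    and "on_shortest_path (L_V n) line_E (arc (t, r)) (arc (r, s)) (arc (t, u))"
proof -
  have "(r, t) \<in> arcs n" "(t, r) \<in> arcs n" using assms by auto
  then have "on_shortest_path (L_V n) line_E (arc (r, t)) (arc (r, s)) (arc (t, u)) \<and>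
    on_shortest_path (L_V n) line_E (arc (t, r)) (arc (r, s)) (arc (t, u))"
  proof (cases "s = t")
    case True
    then show ?thesis using assms \<open>(t, r) \<in> arcs n\<close>
      by (intro conjI on_shortest_path_arc_walk[OF rs tu, of "[arc (r, t), arc (t, r), arc (t, u)]"])
        (auto simp: line_E_arc_iff)
  next
    case False
    then show ?thesis using assms \<open>(r, t) \<in> arcs n\<close> \<open>(t, r) \<in> arcs n\<close>
      by (intro conjI on_shortest_path_arc_walk[OF rs tu,
          of "[arc (r, s), arc (r, t), arc (t, r), arc (t, u)]"])
        (auto simp: line_E_arc_iff)
  qed
  then show "on_shortest_path (L_V n) line_E (arc (r, t)) (arc (r, s)) (arc (t, u))"
    and "on_shortest_path (L_V n) line_E (arc (t, r)) (arc (r, s)) (arc (t, u))" by auto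
qed

definition omitted_arcs :: "nat \<Rightarrow> (nat \<times> nat) set" where
  "omitted_arcs n = insert (2, 1) (Pair 1 ` {2..n})"

lemma omitted_arcs_subset: "2 \<le> n \<Longrightarrow> omitted_arcs n \<subseteq> arcs n"
  by (auto simp: omitted_arcs_def)

lemma card_omitted_arcs:
  assumes "1 \<le> n"
  shows "card (omitted_arcs n) = n"
proof -
  have "card (Pair (1 :: nat) ` {2..n}) = n - 1" by (simp add: card_image inj_on_def)
  moreover have "(2, 1) \<notin> Pair (1 :: nat) ` {2..n}" by auto
  ultimately show ?thesis using assms by (simp add: omitted_arcs_def)
qed

lemma card_L_V_Diff_omitted:
  assumes "2 \<le> n"
  shows "card (L_V n - arc ` omitted_arcs n) = n * (n - 2)"
proof -
  have "L_V n - arc ` omitted_arcs n = arc ` (arcs n - omitted_arcs n)"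
    by (simp add: L_V_eq image_set_diff[OF inj_arc])
  moreover have "omitted_arcs n \<subseteq> arcs n" using assms by (rule omitted_arcs_subset)
  ultimately have "card (L_V n - arc ` omitted_arcs n) = card (arcs n) - card (omitted_arcs n)"
    using card_Diff_subset[OF finite_subset[OF _ finite_arcs]]
    by (simp add: card_image[OF inj_on_subset[OF inj_arc]])
  then show ?thesis using assms by (simp add: card_arcs card_omitted_arcs diff_mult_distrib2)
qed

lemma omitted_arcs_resolved:
  assumes n: "3 \<le> n" and ab: "a \<in> omitted_arcs n" "b \<in> omitted_arcs n" "a \<noteq> b"
  shows "\<exists>w \<in> arcs n - omitted_arcs n.
    on_shortest_path (L_V n) line_E (arc a) (arc b) (arc w) \<or>
    on_shortest_path (L_V n) line_E (arc b) (arc a) (arc w)"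
proof -
  have "(2, 3) \<in> arcs n - omitted_arcs n" using n by (auto simp: omitted_arcs_def)
  consider (out) s t where "a = (1, s)" "b = (1, t)" "s \<in> {2..n}" "t \<in> {2..n}" "s \<noteq> t"
    | (in_out) s where "{a, b} = {(1, s), (2, 1)}" "s \<in> {2..n}"
    using ab unfolding omitted_arcs_def by blast
  then show ?thesis
  proof cases
    case out
    define x where "x = (if t = 2 then 3 else 2 :: nat)"
    have "(t, x) \<in> arcs n - omitted_arcs n" using n out by (auto simp: x_def omitted_arcs_def)
    moreover have "on_shortest_path (L_V n) line_E (arc b) (arc a) (arc (t, x))"
      using out n by (auto simp: x_def intro: on_shortest_path_via_pair_vertex(1))
    ultimately show ?thesis by blast
  next
    case in_out
    have "on_shortest_path (L_V n) line_E (arc (2, 1)) (arc (1, s)) (arc (2, 3))"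
      using in_out n by (intro on_shortest_path_via_pair_vertex(2)) auto
    then show ?thesis using in_out \<open>(2, 3) \<in> arcs n - omitted_arcs n\<close> by (auto simp: doubleton_eq_iff)
  qed
qed

lemma strong_resolving_set_L_V_Diff_omitted:
  assumes "3 \<le> n"
  shows "strong_resolving_set (L_V n) line_E (L_V n - arc ` omitted_arcs n)"
proof (rule strong_resolving_set_Diff)
  show "arc ` omitted_arcs n \<subseteq> L_V n"
    using omitted_arcs_subset[of n] assms unfolding L_V_eq by (intro image_mono) simp
next
  fix u v assume "u \<in> L_V n" "v \<in> L_V n"
  then obtain p q where "p \<in> arcs n" "q \<in> arcs n" "u = arc p" "v = arc q"
    unfolding L_V_eq by blast
  then show "\<exists>xs. walk (L_V n) line_E xs \<and> hd xs = u \<and> last xs = v"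
    using arc_walk_exists[of p n q] by blast
next
  fix p q assume "p \<in> arc ` omitted_arcs n" "q \<in> arc ` omitted_arcs n" "p \<noteq> q"
  then obtain a b where ab: "a \<in> omitted_arcs n" "b \<in> omitted_arcs n" "a \<noteq> b" "p = arc a" "q = arc b"
    by blast
  then obtain w where "w \<in> arcs n - omitted_arcs n"
    "on_shortest_path (L_V n) line_E p q (arc w) \<or> on_shortest_path (L_V n) line_E q p (arc w)"
    using omitted_arcs_resolved[OF assms ab(1-3)] by blast
  moreover have "arc ` (arcs n - omitted_arcs n) = L_V n - arc ` omitted_arcs n"
    by (simp add: L_V_eq image_set_diff[OF inj_arc])
  ultimately show "\<exists>w \<in> L_V n - arc ` omitted_arcs n.
    on_shortest_path (L_V n) line_E p q w \<or> on_shortest_path (L_V n) line_E q p w"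
    by blast
qed

lemma gdist_L_V_le_3:
  assumes "x \<in> L_V n" "y \<in> L_V n"
  shows "gdist (L_V n) line_E x y \<le> 3"
proof -
  obtain p q where "p \<in> arcs n" "q \<in> arcs n" "x = arc p" "y = arc q"
    using assms unfolding L_V_eq by blast
  then show ?thesis using arc_dist_le_3[of p q] gdist_L_V_arc[of p n q] by simp
qed

lemma inj_on_snd_arcs_outside_strong_resolving_set:
  assumes Q: "strong_resolving_set (L_V n) line_E Q"
  shows "inj_on snd {p \<in> arcs n. arc p \<notin> Q}"
proof (rule inj_onI)
  fix p q assume pq: "p \<in> {p \<in> arcs n. arc p \<notin> Q}" "q \<in> {p \<in> arcs n. arc p \<notin> Q}" "snd p = snd q"
  show "p = q"
  proof (rule ccontr)
    assume "p \<noteq> q"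
    with pq have "arc_dist p q = 3" "arc_dist q p = 3"
      by (cases p; cases q; auto)+
    with pq \<open>p \<noteq> q\<close> have "arc p \<in> Q \<or> arc q \<in> Q"
      by (intro strong_resolving_set_diametral_pair[OF Q _ _ _ gdist_L_V_le_3])
        (auto simp: gdist_L_V_arc)
    then show False using pq by auto
  qed
qed

lemma card_strong_resolving_set_L_V_ge:
  assumes Q: "strong_resolving_set (L_V n) line_E Q"
  shows "n * (n - 2) \<le> card Q"
proof -
  define W where "W = {p \<in> arcs n. arc p \<notin> Q}"
  have "snd ` W \<subseteq> {1..n}" by (auto simp: W_def arcs_def)
  with inj_on_snd_arcs_outside_strong_resolving_set[OF Q, folded W_def]
  have "card W \<le> card {1..n}" by (rule card_inj_on_le) simp
  then have "card W \<le> n" by simp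
  have QV: "Q \<subseteq> L_V n" using Q by (simp add: strong_resolving_set_def)
  have "arc ` W = L_V n - Q" by (auto simp: W_def L_V_eq)
  then have "card W = card (L_V n - Q)"
    using card_image[OF inj_on_subset[OF inj_arc subset_UNIV]] by metis
  also have "\<dots> = card (L_V n) - card Q"
    using QV finite_L_V by (simp add: card_Diff_subset finite_subset)
  finally have "card (L_V n) = card Q + card W"
    using card_mono[OF finite_L_V QV] by linarith
  then show ?thesis using \<open>card W \<le> n\<close> by (simp add: card_L_V diff_mult_distrib2)
qed

theorem theorem3p10:
  fixes n :: nat
  assumes "n \<ge> 5"
  shows "strong_metric_dim (L_V n) L_E = n * (n - 2)"
  unfolding strong_metric_dim_def
proof (rule Least_equality)
  show "\<exists>Q. strong_resolving_set (L_V n) L_E Q \<and> card Q = n * (n - 2)"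
    using strong_resolving_set_L_V_Diff_omitted card_L_V_Diff_omitted assms
    by (intro exI[of _ "L_V n - arc ` omitted_arcs n"]) simp
next
  fix k assume "\<exists>Q. strong_resolving_set (L_V n) L_E Q \<and> card Q = k"
  then show "n * (n - 2) \<le> k" using card_strong_resolving_set_L_V_ge by blast
qed

end
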